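(* For every $m\in\mathbb N$ there exists a ReLU neural network $\varphi_m^{\exp}\in\widetilde\Phi(m^2\log^2m,\ m\log m,\ m^3\log^3m,\ 1)$ with $|\varphi^{\exp}_m(x)-e^{-x}|\le2^{-m}$ for all $x\ge0$.
   Context: ReLU networks are maps $x\mapsto A_L\sigma_{b_L}\cdots A_1\sigma_{b_1}A_0x$ with $\sigma_b(x)=((x_j-b_j)\vee0)_j$. $\widetilde\Phi(\tilde L,\tilde W,\tilde S,\tilde B)$ is the class of such networks with depth $\lesssim\tilde L$, maximal layer width $\lesssim\tilde W$, number of nonzero weights/biases $\lesssim\tilde S$ and all parameters bounded in absolute value by a quantity $\lesssim\tilde B$, with constants independent of $m$. *)

theory Defs
  imports Complex_Main
begin

text \<open>Vectors in R^d are functions nat => real (only entries j < d matter);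
  a d'-by-d matrix is a function nat => nat => real (only entries i < d', j < d matter).\<close>

definition matvec :: "(nat \<Rightarrow> nat \<Rightarrow> real) \<Rightarrow> nat \<Rightarrow> (nat \<Rightarrow> real) \<Rightarrow> (nat \<Rightarrow> real)" where
  "matvec A d v = (\<lambda>i. \<Sum>j<d. A i j * v j)"

definition sigma_shift :: "(nat \<Rightarrow> real) \<Rightarrow> (nat \<Rightarrow> real) \<Rightarrow> (nat \<Rightarrow> real)" where
  "sigma_shift b v = (\<lambda>j. max (v j - b j) 0)"

fun hidden_layers :: "nat list \<Rightarrow> (nat \<Rightarrow> nat \<Rightarrow> real) list \<Rightarrow> (nat \<Rightarrow> real) list
    \<Rightarrow> (nat \<Rightarrow> real) \<Rightarrow> (nat \<Rightarrow> real)" where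
  "hidden_layers (d # ds) (A # As) (b # bs) v = hidden_layers ds As bs (matvec A d (sigma_shift b v))"
| "hidden_layers _ _ _ v = v"

text \<open>A ReLU network with input/output dimension 1 is given by widths ds = [d_0,...,d_(L+1)],
  matrices As = [A_0,...,A_L] (A_k is d_(k+1) x d_k) and biases bs = [b_1,...,b_L] (b_k in R^(d_k)).\<close>
definition relu_net :: "nat list \<Rightarrow> (nat \<Rightarrow> nat \<Rightarrow> real) list \<Rightarrow> (nat \<Rightarrow> real) list \<Rightarrow> bool" where
  "relu_net ds As bs \<longleftrightarrow> length As = length bs + 1 \<and> length ds = length As + 1
     \<and> hd ds = 1 \<and> last ds = 1"

text \<open>Realisation x |-> A_L sigma_(b_L) ... A_1 sigma_(b_1) A_0 x  (scalar in, scalar out).\<close>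
definition realize :: "nat list \<Rightarrow> (nat \<Rightarrow> nat \<Rightarrow> real) list \<Rightarrow> (nat \<Rightarrow> real) list \<Rightarrow> real \<Rightarrow> real" where
  "realize ds As bs x = hidden_layers (tl ds) (tl As) bs (matvec (hd As) (hd ds) (\<lambda>_. x)) 0"

definition net_depth :: "(nat \<Rightarrow> real) list \<Rightarrow> nat" where
  "net_depth bs = length bs"

definition net_width :: "nat list \<Rightarrow> nat" where
  "net_width ds = Max (set ds)"

definition net_size :: "nat list \<Rightarrow> (nat \<Rightarrow> nat \<Rightarrow> real) list \<Rightarrow> (nat \<Rightarrow> real) list \<Rightarrow> nat" where
  "net_size ds As bs =
     (\<Sum>k<length As. card {(i, j). i < ds ! (k + 1) \<and> j < ds ! k \<and> (As ! k) i j \<noteq> 0})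
   + (\<Sum>k<length bs. card {j. j < ds ! (k + 1) \<and> (bs ! k) j \<noteq> 0})"

definition params_bounded :: "nat list \<Rightarrow> (nat \<Rightarrow> nat \<Rightarrow> real) list \<Rightarrow> (nat \<Rightarrow> real) list \<Rightarrow> real \<Rightarrow> bool" where
  "params_bounded ds As bs B \<longleftrightarrow>
     (\<forall>k<length As. \<forall>i<ds ! (k + 1). \<forall>j<ds ! k. \<bar>(As ! k) i j\<bar> \<le> B)
   \<and> (\<forall>k<length bs. \<forall>j<ds ! (k + 1). \<bar>(bs ! k) j\<bar> \<le> B)"

end

theory Submission
  imports Defs
begin

text \<open>Since \<open>exp (- x) \<approx> (1 - x / N) ^ N\<close> for \<open>N = 2 ^ k\<close>, the network clips \<open>x / N\<close> at
  \<open>2 m / N\<close> (for \<open>x \<ge> 2 m\<close> both sides are below \<open>1 / (4 * 2 ^ m)\<close>) and then squares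
  \<open>1 - x / N\<close> \<open>k\<close> times. Each squaring is approximated to within \<open>1 / 4 ^ (n + 1)\<close> by
  Yarotsky's sawtooth construction, \<open>n\<close> ReLU layers of width 4, and these errors add up to at
  most \<open>2 ^ k / 4 ^ (n + 1)\<close>. With \<open>k = 3 m + 4\<close> and \<open>n = 2 m + 2\<close> this error, the error
  \<open>N y\<^sup>2\<close> of \<open>(1 - y) ^ N\<close> against \<open>exp (- N y)\<close> on the clipped range, and the clipping
  error are each at most \<open>1 / (4 * 2 ^ m)\<close>. The network has width 4, depth and size
  \<open>O(m\<^sup>2)\<close> and parameters bounded by 4, well within the required bounds.\<close>

section \<open>Networks of constant width\<close>

type_synonym layer_params = "(nat \<Rightarrow> nat \<Rightarrow> real) \<times> (nat \<Rightarrow> real)"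

definition layer :: "nat \<Rightarrow> layer_params \<Rightarrow> (nat \<Rightarrow> real) \<Rightarrow> nat \<Rightarrow> real" where
  "layer w p v = matvec (fst p) w (sigma_shift (snd p) v)"

definition const_width_dims :: "nat \<Rightarrow> nat \<Rightarrow> nat list" where
  "const_width_dims w L = 1 # replicate L w @ [1]"

lemma hidden_layers_const_width:
  "hidden_layers (replicate (length ps) w @ [1]) (map fst ps) (map snd ps) v = fold (layer w) ps v"
  by (induction ps arbitrary: v) (simp_all add: layer_def)

lemma relu_net_const_width:
  "relu_net (const_width_dims w (length ps)) (A # map fst ps) (map snd ps)"
  by (simp add: relu_net_def const_width_dims_def)

lemma realize_const_width:
  "realize (const_width_dims w (length ps)) (A # map fst ps) (map snd ps) x
     = fold (layer w) ps (matvec A 1 (\<lambda>_. x)) 0"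
  using hidden_layers_const_width[of ps w] by (simp add: realize_def const_width_dims_def)

lemma const_width_dims_le: "1 \<le> w \<Longrightarrow> d \<in> set (const_width_dims w L) \<Longrightarrow> d \<le> w"
  by (auto simp: const_width_dims_def)

lemma net_width_const_width: "1 \<le> w \<Longrightarrow> net_width (const_width_dims w L) \<le> w"
  unfolding net_width_def
  by (rule Max.boundedI) (auto simp: const_width_dims_le, simp add: const_width_dims_def)

lemma card_pairs_less_le: "card {(i, j). i < a \<and> j < b \<and> P i j} \<le> a * b"
proof -
  have "{(i, j). i < a \<and> j < b \<and> P i j} \<subseteq> {..<a} \<times> {..<b}" by auto
  then have "card {(i, j). i < a \<and> j < b \<and> P i j} \<le> card ({..<a} \<times> {..<b})"
    by (intro card_mono) auto
  then show ?thesis by (simp add: card_cartesian_product)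
qed

lemma card_less_le: "card {j. j < a \<and> P j} \<le> a"
  using card_mono[of "{..<a}" "{j. j < a \<and> P j}"] by auto

lemma net_size_const_width:
  assumes "1 \<le> w"
  shows "net_size (const_width_dims w (length ps)) (A # map fst ps) (map snd ps)
           \<le> (length ps + 1) * w\<^sup>2 + length ps * w"
proof -
  let ?ds = "const_width_dims w (length ps)" and ?As = "A # map fst ps" and ?bs = "map snd ps"
  have dim: "?ds ! k \<le> w" if "k < length ps + 2" for k
    using const_width_dims_le[OF assms nth_mem] that by (simp add: const_width_dims_def)
  have weight_count: "card {(i, j). i < ?ds ! (k + 1) \<and> j < ?ds ! k \<and> (?As ! k) i j \<noteq> 0} \<le> w\<^sup>2"
    if "k \<in> {..<length ?As}" for k
  proof -
    have "?ds ! (k + 1) * ?ds ! k \<le> w * w" using that by (intro mult_le_mono dim) auto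
    then show ?thesis
      using card_pairs_less_le[of "?ds ! (k + 1)" "?ds ! k" "\<lambda>i j. (?As ! k) i j \<noteq> 0"]
      unfolding power2_eq_square by linarith
  qed
  have bias_count: "card {j. j < ?ds ! (k + 1) \<and> (?bs ! k) j \<noteq> 0} \<le> w"
    if "k \<in> {..<length ?bs}" for k
    using card_less_le[of "?ds ! (k + 1)" "\<lambda>j. (?bs ! k) j \<noteq> 0"] dim[of "k + 1"] that
    by simp
  have weights: "(\<Sum>k<length ?As. card {(i, j). i < ?ds ! (k + 1) \<and> j < ?ds ! k \<and> (?As ! k) i j \<noteq> 0})
      \<le> (\<Sum>k<length ?As. w\<^sup>2)"
    by (rule sum_mono) (rule weight_count)
  have biases: "(\<Sum>k<length ?bs. card {j. j < ?ds ! (k + 1) \<and> (?bs ! k) j \<noteq> 0}) \<le> (\<Sum>k<length ?bs. w)"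
    by (rule sum_mono) (rule bias_count)
  show ?thesis unfolding net_size_def using add_mono[OF weights biases] by simp
qed

lemma params_bounded_const_width:
  assumes "\<And>i j. \<bar>A i j\<bar> \<le> B"
    and "\<And>p i j. p \<in> set ps \<Longrightarrow> \<bar>fst p i j\<bar> \<le> B"
    and "\<And>p j. p \<in> set ps \<Longrightarrow> \<bar>snd p j\<bar> \<le> B"
  shows "params_bounded (const_width_dims w (length ps)) (A # map fst ps) (map snd ps) B"
  unfolding params_bounded_def
proof (intro conjI allI impI)
  fix k i j assume "k < length (A # map fst ps)"
  then show "\<bar>((A # map fst ps) ! k) i j\<bar> \<le> B"
    using assms(1,2) by (cases k) auto
next
  fix k j assume "k < length (map snd ps)"
  then show "\<bar>(map snd ps ! k) j\<bar> \<le> B" using assms(3) by simp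
qed

section \<open>Approximate squaring by sawtooth functions\<close>

definition hat :: "real \<Rightarrow> real" where
  "hat u = 2 * u - 4 * max (u - 1/2) 0"

lemma hat_in_unit: "u \<in> {0..1} \<Longrightarrow> hat u \<in> {0..1}"
  by (auto simp: hat_def max_def)

lemma funpow_hat_in_unit: "u \<in> {0..1} \<Longrightarrow> (hat ^^ n) u \<in> {0..1}"
  by (induction n) (auto simp del: atLeastAtMost_iff intro: hat_in_unit)

lemma hat_parabola_gap: "u \<in> {0..1} \<Longrightarrow> 4 * (u - u\<^sup>2) - hat u = hat u - (hat u)\<^sup>2"
  by (auto simp: hat_def max_def power2_eq_square algebra_simps)

definition sawtooth_sum :: "nat \<Rightarrow> real \<Rightarrow> real" where
  "sawtooth_sum n t = (\<Sum>j = 1..n. (hat ^^ j) t / 4 ^ j)"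

text \<open>\<open>t - sawtooth_sum n t\<close> is the piecewise linear interpolant of \<open>t\<^sup>2\<close> at the nodes
  \<open>k/2\<^sup>n\<close>; the gap to \<open>t\<^sup>2\<close> is the last sawtooth \<open>hat\<^sup>n\<close> composed with the parabola gap.\<close>
lemma square_eq_sawtooth_sum:
  assumes "t \<in> {0..1}"
  shows "t - sawtooth_sum n t = t\<^sup>2 + ((hat ^^ n) t - ((hat ^^ n) t)\<^sup>2) / 4 ^ n"
proof (induction n)
  case 0
  then show ?case by (simp add: sawtooth_sum_def)
next
  case (Suc n)
  define u where "u = (hat ^^ n) t"
  have gap: "4 * (u - u\<^sup>2) - hat u = hat u - (hat u)\<^sup>2"
    using hat_parabola_gap funpow_hat_in_unit[OF assms] by (simp add: u_def)
  have "t - sawtooth_sum (Suc n) t = t - sawtooth_sum n t - hat u / 4 ^ Suc n"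
    by (simp add: sawtooth_sum_def u_def)
  also have "\<dots> = t\<^sup>2 + (4 * (u - u\<^sup>2) - hat u) / 4 ^ Suc n"
    using Suc by (simp add: u_def field_simps)
  also have "\<dots> = t\<^sup>2 + ((hat ^^ Suc n) t - ((hat ^^ Suc n) t)\<^sup>2) / 4 ^ Suc n"
    unfolding gap by (simp add: u_def)
  finally show ?case .
qed

lemma parabola_gap_bounds: "u \<in> {0..1} \<Longrightarrow> 0 \<le> u - u\<^sup>2 \<and> u - u\<^sup>2 \<le> (1::real) / 4"
  using zero_le_power2[of "u - 1/2"] by (auto simp: power2_eq_square algebra_simps mult_left_le)

lemma sawtooth_interpolant_bounds:
  assumes "t \<in> {0..1}"
  shows "t\<^sup>2 \<le> t - sawtooth_sum n t \<and> t - sawtooth_sum n t \<le> t\<^sup>2 + 1 / 4 ^ (n + 1)"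
proof -
  define u where "u = (hat ^^ n) t"
  have u: "0 \<le> u - u\<^sup>2" "u - u\<^sup>2 \<le> 1 / 4"
    using parabola_gap_bounds[OF funpow_hat_in_unit[OF assms]] by (auto simp: u_def)
  have "0 \<le> (u - u\<^sup>2) / 4 ^ n" by (rule divide_nonneg_nonneg[OF u(1)]) simp
  moreover have "(u - u\<^sup>2) / 4 ^ n \<le> (1 / 4) / 4 ^ n" by (rule divide_right_mono[OF u(2)]) simp
  ultimately show ?thesis using square_eq_sawtooth_sum[OF assms, of n] by (simp add: u_def)
qed

lemma sawtooth_sum_nonneg: "t \<in> {0..1} \<Longrightarrow> 0 \<le> sawtooth_sum n t"
  using funpow_hat_in_unit by (auto simp: sawtooth_sum_def intro!: sum_nonneg)

text \<open>The cut-off at 1 keeps the iterates in \<open>[0, 1]\<close>, where \<open>hat\<close> is the tent map; the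
  interpolant itself can exceed 1 by up to \<open>1 / 4 ^ (n + 1)\<close>.\<close>
definition approx_square :: "nat \<Rightarrow> real \<Rightarrow> real" where
  "approx_square n t = min (t - sawtooth_sum n t) 1"

lemma approx_square_bounds:
  assumes "t \<in> {0..1}"
  shows "approx_square n t \<in> {0..1} \<and> t\<^sup>2 \<le> approx_square n t \<and> approx_square n t \<le> t\<^sup>2 + 1 / 4 ^ (n + 1)"
proof -
  have "t\<^sup>2 \<le> 1" using assms by (simp add: power_le_one)
  moreover have "0 \<le> t - sawtooth_sum n t"
    using sawtooth_interpolant_bounds[OF assms, of n] zero_le_power2[of t] by linarith
  ultimately show ?thesis
    using sawtooth_interpolant_bounds[OF assms, of n] by (auto simp: approx_square_def)
qed

lemma funpow_approx_square:
  fixes f :: "real \<Rightarrow> real"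
  assumes f: "\<And>t. t \<in> {0..1} \<Longrightarrow> f t \<in> {0..1} \<and> t\<^sup>2 \<le> f t \<and> f t \<le> t\<^sup>2 + \<epsilon>"
    and t: "t \<in> {0..1}"
  shows "(f ^^ i) t \<in> {0..1} \<and> t ^ 2 ^ i \<le> (f ^^ i) t \<and> (f ^^ i) t \<le> t ^ 2 ^ i + (2 ^ i - 1) * \<epsilon>"
proof (induction i)
  case 0
  then show ?case using t by simp
next
  case (Suc i)
  define c where "c = (f ^^ i) t"
  define e where "e = t ^ 2 ^ i"
  have IH: "c \<in> {0..1}" "e \<le> c" "c \<le> e + (2 ^ i - 1) * \<epsilon>"
    using Suc by (auto simp: c_def e_def)
  have "0 \<le> e" using t by (simp add: e_def)
  have fc: "f c \<in> {0..1}" "c\<^sup>2 \<le> f c" "f c \<le> c\<^sup>2 + \<epsilon>" using f[OF IH(1)] by auto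
  have "e\<^sup>2 \<le> c\<^sup>2" using \<open>0 \<le> e\<close> IH by (simp add: power_mono)
  have "c\<^sup>2 - e\<^sup>2 = (c - e) * (c + e)" by (simp add: power2_eq_square algebra_simps)
  also have "\<dots> \<le> (c - e) * 2" using IH \<open>0 \<le> e\<close> by (intro mult_left_mono) auto
  also have "\<dots> \<le> (2 ^ i - 1) * \<epsilon> * 2" using IH by simp
  finally have "f c \<le> e\<^sup>2 + (2 ^ Suc i - 1) * \<epsilon>" using fc by (simp add: algebra_simps)
  moreover have "t ^ 2 ^ Suc i = e\<^sup>2" by (simp add: e_def power_mult[symmetric] mult.commute)
  ultimately show ?case using fc \<open>e\<^sup>2 \<le> c\<^sup>2\<close> by (simp add: c_def)
qed

lemma funpow_approx_square_error:
  assumes "t \<in> {0..1}"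
  shows "\<bar>(approx_square n ^^ k) t - t ^ 2 ^ k\<bar> \<le> 2 ^ k / 4 ^ (n + 1)"
proof -
  have "(approx_square n ^^ k) t \<in> {0..1} \<and> t ^ 2 ^ k \<le> (approx_square n ^^ k) t
      \<and> (approx_square n ^^ k) t \<le> t ^ 2 ^ k + (2 ^ k - 1) * (1 / 4 ^ (n + 1))"
    by (rule funpow_approx_square[OF approx_square_bounds assms])
  moreover have "(2 ^ k - 1) * (1 / 4 ^ (n + 1)) \<le> (2 ^ k :: real) / 4 ^ (n + 1)"
    by (simp add: divide_right_mono)
  ultimately show ?thesis by auto
qed

section \<open>Approximating the exponential\<close>

lemma exp_minus_le_one_minus_plus_square:
  fixes y :: real
  assumes "0 \<le> y"
  shows "exp (- y) \<le> 1 - y + y\<^sup>2"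
proof -
  have "exp (- y) = 1 / exp y" by (simp add: exp_minus field_simps)
  also have "\<dots> \<le> 1 / (1 + y)" using assms by (intro divide_left_mono) auto
  also have "\<dots> = 1 - y + y\<^sup>2 / (1 + y)" using assms by (simp add: field_simps power2_eq_square)
  also have "\<dots> \<le> 1 - y + y\<^sup>2 / 1" using assms by (intro add_left_mono divide_left_mono) auto
  finally show ?thesis by simp
qed

lemma one_minus_power_approx_exp:
  fixes y :: real
  assumes "y \<in> {0..1}"
  shows "\<bar>(1 - y) ^ N - exp (- (N * y))\<bar> \<le> N * y\<^sup>2"
proof -
  have "\<bar>(1 - y) ^ N - exp (- (N * y))\<bar> = \<bar>(1 - y) ^ N - exp (- y) ^ N\<bar>"
    by (simp add: exp_of_nat_mult[symmetric])
  also have "\<dots> \<le> N * \<bar>(1 - y) - exp (- y)\<bar>"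
    using norm_power_diff[of "1 - y" "exp (- y)" N] assms by simp
  also have "\<dots> \<le> N * y\<^sup>2"
    using exp_minus_le_one_minus_plus_square[of y] exp_ge_add_one_self[of "- y"] assms
    by (intro mult_left_mono) auto
  finally show ?thesis .
qed

lemma abs_exp_minus_min_le: "\<bar>exp (- min x a) - exp (- x)\<bar> \<le> exp (- a)"
  for x a :: real
  by (cases "x \<le> a") (auto simp: min_def)

lemma clip_level_le_one: "2 * real m / 2 ^ (3 * m + 4) \<le> 1"
proof -
  have "2 * real m \<le> 2 * 2 ^ m" using of_nat_less_two_power[of m] by simp
  also have "\<dots> \<le> 2 ^ (3 * m + 4)" by (subst power_Suc[symmetric], intro power_increasing) auto
  finally show ?thesis by simp
qed

lemma two_power_div_four_power: "(2::real) ^ (3 * m + 4) / 4 ^ (2 * m + 2 + 1) = 1 / (4 * 2 ^ m)"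
proof -
  have "(2::real) ^ (3 * m + 4) = 16 * (2 ^ m) ^ 3"
    by (simp add: power_add power_mult[symmetric] mult.commute)
  moreover have "(4::real) ^ (2 * m + 2 + 1) = 64 * ((4::real) ^ m)\<^sup>2"
    by (simp add: power_add power_mult[symmetric] mult.commute)
  moreover have "(4::real) ^ m = (2 ^ m)\<^sup>2" by (simp add: power2_eq_square flip: power_mult_distrib)
  ultimately show ?thesis by (simp add: field_simps eval_nat_numeral)
qed

lemma clip_power_error_le: "(2::real) ^ (3 * m + 4) * (2 * real m / 2 ^ (3 * m + 4))\<^sup>2 \<le> 1 / (4 * 2 ^ m)"
proof -
  define P :: real where "P = 2 ^ m"
  have "0 < P" "real m \<le> P" using of_nat_less_two_power[of m] by (auto simp: P_def)
  have "(2::real) ^ (3 * m + 4) = 16 * P ^ 3"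
    by (simp add: P_def power_add power_mult[symmetric] mult.commute)
  then have "(2::real) ^ (3 * m + 4) * (2 * real m / 2 ^ (3 * m + 4))\<^sup>2 = (real m)\<^sup>2 / (4 * P ^ 3)"
    using \<open>0 < P\<close> by (simp add: field_simps power2_eq_square)
  also have "\<dots> \<le> P\<^sup>2 / (4 * P ^ 3)"
    using \<open>real m \<le> P\<close> \<open>0 < P\<close> by (intro divide_right_mono power_mono) auto
  also have "\<dots> = 1 / (4 * P)" using \<open>0 < P\<close> by (simp add: field_simps eval_nat_numeral)
  finally show ?thesis by (simp add: P_def)
qed

lemma exp_minus_twice_le: "2 \<le> m \<Longrightarrow> exp (- (2 * real m)) \<le> 1 / (4 * 2 ^ m)"
proof -
  assume "2 \<le> m"
  define P :: real where "P = 2 ^ m"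
  have "4 \<le> P" using power_increasing[OF \<open>2 \<le> m\<close>, of "2::real"] by (simp add: P_def)
  have "P \<le> exp 1 ^ m"
    unfolding P_def using exp_ge_add_one_self[of 1] by (intro power_mono) auto
  then have "P \<le> exp (real m)" by (simp add: exp_of_nat_mult[symmetric] mult.commute)
  then have "4 * P \<le> exp (real m) * exp (real m)"
    using \<open>4 \<le> P\<close> by (intro mult_mono) auto
  then show ?thesis
    using \<open>4 \<le> P\<close> by (simp add: P_def exp_minus exp_add[symmetric] mult_2 field_simps)
qed

lemma exp_approx_error:
  fixes m :: nat and x :: real
  assumes m: "2 \<le> m" and x: "0 \<le> x"
  defines "N \<equiv> (2::real) ^ (3 * m + 4)"
  shows "\<bar>(approx_square (2 * m + 2) ^^ (3 * m + 4)) (1 - min (x / N) (2 * real m / N)) - exp (- x)\<bar>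
    \<le> 1 / 2 ^ m"
proof -
  define y where "y = min (x / N) (2 * real m / N)"
  have "0 < N" by (simp add: N_def)
  have "2 * real m / N \<le> 1" using clip_level_le_one[of m] by (simp add: N_def)
  moreover have "y \<le> 2 * real m / N" "0 \<le> y" using x \<open>0 < N\<close> by (simp_all add: y_def)
  ultimately have y: "y \<in> {0..1}" "1 - y \<in> {0..1}" "y \<le> 2 * real m / N" by auto
  have squaring: "\<bar>(approx_square (2 * m + 2) ^^ (3 * m + 4)) (1 - y) - (1 - y) ^ 2 ^ (3 * m + 4)\<bar>
      \<le> 1 / (4 * 2 ^ m)"
    using funpow_approx_square_error[OF y(2), where n = "2 * m + 2" and k = "3 * m + 4"]
    unfolding two_power_div_four_power .
  have "real (2 ^ (3 * m + 4)) = N" by (simp add: N_def)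
  then have "\<bar>(1 - y) ^ 2 ^ (3 * m + 4) - exp (- (N * y))\<bar> \<le> N * y\<^sup>2"
    using one_minus_power_approx_exp[OF y(1), of "2 ^ (3 * m + 4)"] by simp
  also have "\<dots> \<le> N * (2 * real m / N)\<^sup>2" using y \<open>0 < N\<close> by (intro mult_left_mono power_mono) auto
  also have "\<dots> \<le> 1 / (4 * 2 ^ m)" unfolding N_def by (rule clip_power_error_le)
  finally have power: "\<bar>(1 - y) ^ 2 ^ (3 * m + 4) - exp (- (N * y))\<bar> \<le> 1 / (4 * 2 ^ m)" .
  have "N * y = min x (2 * m)" using \<open>0 < N\<close> by (simp add: y_def min_mult_distrib_left)
  then have clipping: "\<bar>exp (- (N * y)) - exp (- x)\<bar> \<le> 1 / (4 * 2 ^ m)"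
    using abs_exp_minus_min_le[of x "2 * m"] exp_minus_twice_le[OF m] by simp
  have "\<bar>(approx_square (2 * m + 2) ^^ (3 * m + 4)) (1 - y) - exp (- x)\<bar> \<le> 3 / (4 * 2 ^ m)"
    using squaring power clipping by linarith
  also have "\<dots> \<le> 1 / 2 ^ m" by (simp add: field_simps)
  finally show ?thesis by (simp add: y_def)
qed

section \<open>A network of width 4\<close>

text \<open>The four neurons carry \<open>(t, u, u, S)\<close>: the argument \<open>t\<close> of the current squaring, two
  copies of the sawtooth iterate \<open>u\<close> (one for each ReLU of \<open>hat\<close>) and the partial sum \<open>S\<close>.\<close>
definition vec4 :: "real \<Rightarrow> real \<Rightarrow> real \<Rightarrow> real \<Rightarrow> nat \<Rightarrow> real" where
  "vec4 a b c d = (\<lambda>i. if i = 0 then a else if i = 1 then b else if i = 2 then c else d)"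

lemma matvec_4: "matvec A 4 v = (\<lambda>i. A i 0 * v 0 + A i 1 * v 1 + A i 2 * v 2 + A i 3 * v 3)"
  by (simp add: matvec_def eval_nat_numeral)

definition input_layer :: "real \<Rightarrow> layer_params" where
  "input_layer d =
     (\<lambda>i k. if i \<le> 2 then (if k = 0 then -1 else if k \<le> 2 then 1 else 0) else 0, vec4 0 d (-1) 0)"

definition sawtooth_layer :: "nat \<Rightarrow> layer_params" where
  "sawtooth_layer j =
     (\<lambda>i k. if i = 0 then (if k = 0 then 1 else 0)
        else if i \<le> 2 then (if k = 1 then 2 else if k = 2 then -4 else 0)
        else if k = 1 then 2 / 4 ^ j else if k = 2 then -4 / 4 ^ j else if k = 3 then 1 else 0,
      vec4 0 0 (1/2) 0)"

definition subtract_layer :: "layer_params" where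
  "subtract_layer = (\<lambda>i k. if k = 0 then 1 else if k = 3 then -1 else 0, \<lambda>_. 0)"

definition clamp_layer :: "layer_params" where
  "clamp_layer = (\<lambda>i k. if i \<le> 2 then (if k = 0 then 1 else if k = 3 then -1 else 0) else 0, vec4 0 0 0 1)"

lemma layer_input:
  "0 \<le> a \<Longrightarrow> layer 4 (input_layer d) (vec4 a a 0 0)
     = vec4 (1 - min a d) (1 - min a d) (1 - min a d) 0"
  by (auto simp: layer_def input_layer_def matvec_4 sigma_shift_def vec4_def min_def)

lemma layer_sawtooth:
  "0 \<le> t \<Longrightarrow> 0 \<le> u \<Longrightarrow> 0 \<le> S \<Longrightarrow> layer 4 (sawtooth_layer j) (vec4 t u u S)
     = vec4 t (hat u) (hat u) (S + hat u / 4 ^ j)"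
  by (auto simp: layer_def sawtooth_layer_def matvec_4 sigma_shift_def vec4_def hat_def
      max_def field_simps)

lemma layer_subtract:
  "0 \<le> t \<Longrightarrow> 0 \<le> S \<Longrightarrow> layer 4 subtract_layer (vec4 t u u S)
     = vec4 (t - S) (t - S) (t - S) (t - S)"
  by (auto simp: layer_def subtract_layer_def matvec_4 sigma_shift_def vec4_def)

lemma layer_clamp:
  "0 \<le> f \<Longrightarrow> layer 4 clamp_layer (vec4 f f f f) = vec4 (min f 1) (min f 1) (min f 1) 0"
  by (auto simp: layer_def clamp_layer_def matvec_4 sigma_shift_def vec4_def max_def min_def)

definition square_block :: "nat \<Rightarrow> layer_params list" where
  "square_block n = map sawtooth_layer [1..<n + 1] @ [subtract_layer, clamp_layer]"

lemma fold_sawtooth_layers: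
  assumes "0 \<le> t" "u \<in> {0..1}" "0 \<le> S"
  shows "fold (layer 4) (map sawtooth_layer [1..<n + 1]) (vec4 t u u S)
    = vec4 t ((hat ^^ n) u) ((hat ^^ n) u) (S + sawtooth_sum n u)"
proof (induction n)
  case 0
  then show ?case by (simp add: sawtooth_sum_def)
next
  case (Suc n)
  have "0 \<le> (hat ^^ n) u" using funpow_hat_in_unit[OF assms(2)] by simp
  moreover have "0 \<le> S + sawtooth_sum n u" using sawtooth_sum_nonneg[OF assms(2)] assms(3) by simp
  ultimately show ?case
    using Suc layer_sawtooth[OF assms(1)] by (simp add: sawtooth_sum_def add.assoc)
qed

lemma fold_square_block:
  assumes "t \<in> {0..1}"
  shows "fold (layer 4) (square_block n) (vec4 t t t 0)
    = vec4 (approx_square n t) (approx_square n t) (approx_square n t) 0"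
proof -
  have "0 \<le> sawtooth_sum n t" using sawtooth_sum_nonneg[OF assms] .
  moreover have "0 \<le> t - sawtooth_sum n t"
    using sawtooth_interpolant_bounds[OF assms, of n] zero_le_power2[of t] by linarith
  ultimately show ?thesis
    using fold_sawtooth_layers[of t t 0 n] assms
    by (simp add: square_block_def layer_subtract layer_clamp approx_square_def)
qed

lemma fold_square_blocks:
  assumes "t \<in> {0..1}"
  shows "fold (layer 4) (concat (replicate k (square_block n))) (vec4 t t t 0)
    = vec4 ((approx_square n ^^ k) t) ((approx_square n ^^ k) t) ((approx_square n ^^ k) t) 0"
  using assms
proof (induction k arbitrary: t)
  case 0
  then show ?case by simp
next
  case (Suc k)
  then have "approx_square n t \<in> {0..1}" using approx_square_bounds by blast
  then show ?case
    using Suc by (simp add: fold_square_block funpow_Suc_right del: funpow.simps)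
qed

definition exp_input_weights :: "nat \<Rightarrow> nat \<Rightarrow> nat \<Rightarrow> real" where
  "exp_input_weights m = (\<lambda>i j. if i \<le> 1 then 1 / 2 ^ (3 * m + 4) else 0)"

definition exp_layers :: "nat \<Rightarrow> layer_params list" where
  "exp_layers m = input_layer (2 * m / 2 ^ (3 * m + 4))
     # concat (replicate (3 * m + 4) (square_block (2 * m + 2)))"

lemma fold_exp_layers:
  assumes "0 \<le> x"
  shows "fold (layer 4) (exp_layers m) (matvec (exp_input_weights m) 1 (\<lambda>_. x)) 0
    = (approx_square (2 * m + 2) ^^ (3 * m + 4)) (1 - min (x / 2 ^ (3 * m + 4)) (2 * m / 2 ^ (3 * m + 4)))"
proof -
  define N :: real where "N = 2 ^ (3 * m + 4)"
  define z where "z = 1 - min (x / N) (2 * real m / N)"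
  have "z \<in> {0..1}"
  proof -
    have "min (x / N) (2 * real m / N) \<le> 2 * real m / N" by simp
    moreover have "0 \<le> min (x / N) (2 * real m / N)" using assms by (simp add: N_def)
    ultimately show ?thesis
      using clip_level_le_one[of m] unfolding z_def N_def atLeastAtMost_iff by linarith
  qed
  have "matvec (exp_input_weights m) 1 (\<lambda>_. x) = vec4 (x / N) (x / N) 0 0"
    by (rule ext) (simp add: matvec_def exp_input_weights_def vec4_def N_def)
  moreover have "0 \<le> x / N" using assms by (simp add: N_def)
  ultimately have "fold (layer 4) (exp_layers m) (matvec (exp_input_weights m) 1 (\<lambda>_. x))
      = fold (layer 4) (concat (replicate (3 * m + 4) (square_block (2 * m + 2)))) (vec4 z z z 0)"
    by (simp add: exp_layers_def N_def[symmetric] layer_input z_def)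
  also have "\<dots> = vec4 ((approx_square (2 * m + 2) ^^ (3 * m + 4)) z) ((approx_square (2 * m + 2) ^^ (3 * m + 4)) z)
      ((approx_square (2 * m + 2) ^^ (3 * m + 4)) z) 0"
    by (rule fold_square_blocks[OF \<open>z \<in> {0..1}\<close>])
  finally show ?thesis by (simp add: vec4_def z_def N_def)
qed

lemma length_exp_layers: "length (exp_layers m) = 1 + (3 * m + 4) * (2 * m + 4)"
proof -
  have "length (square_block n) = n + 2" for n by (simp add: square_block_def)
  then show ?thesis by (simp add: exp_layers_def length_concat sum_list_replicate algebra_simps)
qed

lemma sawtooth_layer_weights_le: "\<bar>fst (sawtooth_layer j) i k\<bar> \<le> 4"
proof -
  have "2 / 4 ^ j \<le> (2::real)" "4 / 4 ^ j \<le> (4::real)"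
    by (simp_all add: divide_le_eq one_le_power)
  then show ?thesis by (auto simp: sawtooth_layer_def)
qed

lemma exp_layers_params_le:
  assumes "p \<in> set (exp_layers m)"
  shows "\<bar>fst p i j\<bar> \<le> 4" "\<bar>snd p j\<bar> \<le> 4"
proof -
  have "p = input_layer (2 * m / 2 ^ (3 * m + 4)) \<or> p \<in> sawtooth_layer ` {1..<2 * m + 3}
      \<or> p = subtract_layer \<or> p = clamp_layer"
    using assms by (auto simp: exp_layers_def square_block_def)
  moreover have "0 \<le> 2 * real m / 2 ^ (3 * m + 4)" by simp
  then have "\<bar>2 * real m / 2 ^ (3 * m + 4)\<bar> \<le> 4"
    using clip_level_le_one[of m] by (simp only: abs_of_nonneg)
  ultimately show "\<bar>fst p i j\<bar> \<le> 4" "\<bar>snd p j\<bar> \<le> 4"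
    using sawtooth_layer_weights_le
    by (auto simp: input_layer_def sawtooth_layer_def subtract_layer_def clamp_layer_def vec4_def)
qed

lemma length_exp_layers_le:
  assumes "2 \<le> m"
  shows "length (exp_layers m) \<le> 21 * m\<^sup>2"
proof -
  have "2 * m \<le> m * m" "2 * 2 \<le> m * m" using assms by (intro mult_le_mono; simp)+
  moreover have "length (exp_layers m) = 6 * (m * m) + 20 * m + 17"
    by (simp add: length_exp_layers algebra_simps)
  ultimately show ?thesis unfolding power2_eq_square by linarith
qed

lemma params_bounded_mono:
  "params_bounded ds As bs B \<Longrightarrow> B \<le> B' \<Longrightarrow> params_bounded ds As bs B'"
  unfolding params_bounded_def by (meson order_trans)

lemma exists_relu_net_approx_exp:
  assumes m: "2 \<le> m"
  shows "\<exists>ds As bs. relu_net ds As bs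
    \<and> net_depth bs \<le> 21 * m\<^sup>2 \<and> net_width ds \<le> 4 \<and> net_size ds As bs \<le> 436 * m\<^sup>2
    \<and> params_bounded ds As bs 4
    \<and> (\<forall>x \<ge> 0. \<bar>realize ds As bs x - exp (- x)\<bar> \<le> 1 / 2 ^ m)"
proof (intro exI conjI allI impI)
  let ?ps = "exp_layers m"
  let ?ds = "const_width_dims 4 (length ?ps)" and ?As = "exp_input_weights m # map fst ?ps"
  show "relu_net ?ds ?As (map snd ?ps)" by (rule relu_net_const_width)
  show "net_depth (map snd ?ps) \<le> 21 * m\<^sup>2"
    using length_exp_layers_le[OF m] by (simp add: net_depth_def)
  show "net_width ?ds \<le> 4" by (rule net_width_const_width) simp
  have "1 \<le> m\<^sup>2" using m by simp
  then show "net_size ?ds ?As (map snd ?ps) \<le> 436 * m\<^sup>2"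
    using net_size_const_width[where w = 4 and ps = ?ps and A = "exp_input_weights m"]
      length_exp_layers_le[OF m] by simp
  have "(1::real) / 2 ^ (3 * m + 4) \<le> 1" by simp
  then have "(1::real) / 2 ^ (3 * m + 4) \<le> 4" by linarith
  then show "params_bounded ?ds ?As (map snd ?ps) 4"
    using exp_layers_params_le
    by (intro params_bounded_const_width) (auto simp: exp_input_weights_def)
  show "\<bar>realize ?ds ?As (map snd ?ps) x - exp (- x)\<bar> \<le> 1 / 2 ^ m" if "0 \<le> x" for x
    unfolding realize_const_width fold_exp_layers[OF that] by (rule exp_approx_error[OF m that])
qed

lemma le_scaled_log_power:
  fixes n k m p q :: nat
  assumes "2 \<le> m" "n \<le> k * m ^ q" "q \<le> p" "1 \<le> p" "p \<le> 3"
  shows "real n \<le> k / ln 2 ^ 3 * real m ^ p * ln (real m) ^ p"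
proof -
  have "ln 2 ^ 3 \<le> (ln 2 :: real) ^ p" using ln_2_less_1 assms by (intro power_decreasing) auto
  also have "\<dots> \<le> ln (real m) ^ p" using assms by (intro power_mono) auto
  finally have "1 \<le> ln (real m) ^ p / ln 2 ^ 3" by simp
  have "real n \<le> k * real m ^ q" using of_nat_mono[OF assms(2), where 'a = real] by simp
  also have "\<dots> \<le> k * real m ^ p" using assms by (intro mult_left_mono power_increasing) auto
  also have "\<dots> \<le> k * real m ^ p * (ln (real m) ^ p / ln 2 ^ 3)"
    using mult_left_mono[OF \<open>1 \<le> ln (real m) ^ p / ln 2 ^ 3\<close>, of "k * real m ^ p"] by simp
  finally show ?thesis by simp
qed

theorem lemmaC3:
  shows "\<exists>C>0. \<forall>m::nat. m \<ge> 2 \<longrightarrow>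
    (\<exists>ds As bs. relu_net ds As bs
       \<and> real (net_depth bs) \<le> C * real m ^ 2 * (ln (real m)) ^ 2
       \<and> real (net_width ds) \<le> C * real m * ln (real m)
       \<and> real (net_size ds As bs) \<le> C * real m ^ 3 * (ln (real m)) ^ 3
       \<and> params_bounded ds As bs C
       \<and> (\<forall>x::real. x \<ge> 0 \<longrightarrow> \<bar>realize ds As bs x - exp (- x)\<bar> \<le> 1 / 2 ^ m))"
proof -
  define C :: real where "C = 436 / ln 2 ^ 3"
  have "ln 2 ^ 3 \<le> (1::real)" using ln_2_less_1 by (intro power_le_one) auto
  then have "4 \<le> C" by (simp add: C_def field_simps)
  have "\<exists>ds As bs. relu_net ds As bs
       \<and> real (net_depth bs) \<le> C * real m ^ 2 * (ln (real m)) ^ 2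
       \<and> real (net_width ds) \<le> C * real m * ln (real m)
       \<and> real (net_size ds As bs) \<le> C * real m ^ 3 * (ln (real m)) ^ 3
       \<and> params_bounded ds As bs C
       \<and> (\<forall>x::real. x \<ge> 0 \<longrightarrow> \<bar>realize ds As bs x - exp (- x)\<bar> \<le> 1 / 2 ^ m)"
    if m: "2 \<le> m" for m :: nat
  proof -
    obtain ds As bs where net: "relu_net ds As bs" and depth: "net_depth bs \<le> 21 * m\<^sup>2"
      and width: "net_width ds \<le> 4" and size: "net_size ds As bs \<le> 436 * m\<^sup>2"
      and params: "params_bounded ds As bs 4"
      and approx: "\<forall>x \<ge> 0. \<bar>realize ds As bs x - exp (- x)\<bar> \<le> 1 / 2 ^ m"
      using exists_relu_net_approx_exp[OF m] by blast
    have bounds: "net_depth bs \<le> 436 * m ^ 2" "net_width ds \<le> 436 * m ^ 0"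
      "net_size ds As bs \<le> 436 * m ^ 2"
      using depth width size by simp_all
    have "real (net_depth bs) \<le> C * real m ^ 2 * ln (real m) ^ 2"
      unfolding C_def using le_scaled_log_power[OF m bounds(1), where p = 2] by simp
    moreover have "real (net_width ds) \<le> C * real m * ln (real m)"
      unfolding C_def using le_scaled_log_power[OF m bounds(2), where p = 1] by simp
    moreover have "real (net_size ds As bs) \<le> C * real m ^ 3 * ln (real m) ^ 3"
      unfolding C_def using le_scaled_log_power[OF m bounds(3), where p = 3] by simp
    ultimately show ?thesis using net params_bounded_mono[OF params \<open>4 \<le> C\<close>] approx by blast
  qed
  then show ?thesis using \<open>4 \<le> C\<close> by (intro exI[of _ C]) auto
qed

end
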